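(* Let $\{X(s)\}_{s\ge 0}$ be a centered Gaussian process with continuous sample paths whose covariance kernel $R$ satisfies $R(cs,ct)=c^{2\rho}R(s,t)$ for some $\rho>0$ and all $c>0$, $s,t>0$. Let $h(x)=x^{-\rho}R(1,x)$ for $x\ge 1$. Fix $\alpha>1$, let $t_n=\alpha^n$, and set \[ \gamma_{k,l}=\mathrm{Cov}\big(X(t_{k+1})-X(t_k),\,X(t_{l+1})-X(t_l)\big),\qquad \gamma_k=\gamma_{k,k}. \] For integers $j\ge 0$ define $L_j(\alpha)=h(\alpha^j)-\alpha^{-\rho}\{h(\alpha^{j+1})+h(\alpha^{|j-1|})\}+\alpha^{-2\rho}h(\alpha^j)$. Then, whenever $\gamma_k,\gamma_l>0$, \[ \delta_{k,l}:=\frac{\gamma_{k,l}}{\gamma_k^{1/2}\gamma_l^{1/2}}=\frac{L_{|k-l|}(\alpha)}{L_0(\alpha)}. \] *)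

theory Defs
  imports "HOL-Probability.Probability"
begin

definition gaussian_rv :: "'a measure \<Rightarrow> ('a \<Rightarrow> real) \<Rightarrow> bool" where
  "gaussian_rv M Y \<longleftrightarrow> Y \<in> borel_measurable M \<and>
     ((\<exists>\<mu> \<sigma>. \<sigma> > 0 \<and> distributed M lborel Y (normal_density \<mu> \<sigma>))
      \<or> (\<exists>c. AE \<omega> in M. Y \<omega> = c))"

text \<open>Gaussian process indexed by [0,\<infinity>): all finite linear combinations of the
  values are Gaussian (equivalently, finite-dimensional distributions are jointly Gaussian).\<close>
definition gaussian_process :: "'a measure \<Rightarrow> (real \<Rightarrow> 'a \<Rightarrow> real) \<Rightarrow> bool" where
  "gaussian_process M X \<longleftrightarrow> prob_space M \<and>
     (\<forall>T c. finite T \<and> T \<subseteq> {0..} \<longrightarrow> gaussian_rv M (\<lambda>\<omega>. \<Sum>s\<in>T. c s * X s \<omega>))"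

definition centered :: "'a measure \<Rightarrow> (real \<Rightarrow> 'a \<Rightarrow> real) \<Rightarrow> bool" where
  "centered M X \<longleftrightarrow> (\<forall>s\<ge>0. integrable M (X s) \<and> integral\<^sup>L M (X s) = 0)"

definition continuous_paths :: "'a measure \<Rightarrow> (real \<Rightarrow> 'a \<Rightarrow> real) \<Rightarrow> bool" where
  "continuous_paths M X \<longleftrightarrow> (\<forall>\<omega>\<in>space M. continuous_on {0..} (\<lambda>s. X s \<omega>))"

definition cov :: "'a measure \<Rightarrow> ('a \<Rightarrow> real) \<Rightarrow> ('a \<Rightarrow> real) \<Rightarrow> real" where
  "cov M Y Z = integral\<^sup>L M (\<lambda>\<omega>. (Y \<omega> - integral\<^sup>L M Y) * (Z \<omega> - integral\<^sup>L M Z))"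

definition covariance_kernel :: "'a measure \<Rightarrow> (real \<Rightarrow> 'a \<Rightarrow> real) \<Rightarrow> (real \<Rightarrow> real \<Rightarrow> real) \<Rightarrow> bool" where
  "covariance_kernel M X R \<longleftrightarrow>
     (\<forall>s\<ge>0. integrable M (\<lambda>\<omega>. (X s \<omega>)\<^sup>2)) \<and> (\<forall>s\<ge>0. \<forall>t\<ge>0. R s t = cov M (X s) (X t))"

definition hfun :: "real \<Rightarrow> (real \<Rightarrow> real \<Rightarrow> real) \<Rightarrow> real \<Rightarrow> real" where
  "hfun \<rho> R x = x powr (-\<rho>) * R 1 x"

definition Lfun :: "real \<Rightarrow> (real \<Rightarrow> real \<Rightarrow> real) \<Rightarrow> real \<Rightarrow> nat \<Rightarrow> real" where
  "Lfun \<rho> R \<alpha> j = hfun \<rho> R (\<alpha> ^ j)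
     - \<alpha> powr (-\<rho>) * (hfun \<rho> R (\<alpha> ^ (j + 1)) + hfun \<rho> R (\<alpha> ^ nat \<bar>int j - 1\<bar>))
     + \<alpha> powr (-2 * \<rho>) * hfun \<rho> R (\<alpha> ^ j)"

definition gam :: "'a measure \<Rightarrow> (real \<Rightarrow> 'a \<Rightarrow> real) \<Rightarrow> real \<Rightarrow> nat \<Rightarrow> nat \<Rightarrow> real" where
  "gam M X \<alpha> k l = cov M (\<lambda>\<omega>. X (\<alpha> ^ (k + 1)) \<omega> - X (\<alpha> ^ k) \<omega>)
                           (\<lambda>\<omega>. X (\<alpha> ^ (l + 1)) \<omega> - X (\<alpha> ^ l) \<omega>)"

end

theory Submission
  imports Defs
begin

text \<open>The covariance of two increments of a centred process is a second difference of its
  covariance kernel. On the geometric grid \<open>t\<^sub>n = \<alpha>^n\<close> self-similarity writes every kernel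
  value as a power of \<open>p = \<alpha>^\<rho>\<close> times a value of \<open>h\<close>, and the second difference becomes
  \<open>\<gamma>(k, l) = p^(k+1) p^(l+1) L(|k - l|)\<close>; in the correlation the scale factors cancel.\<close>

lemma integrable_mult_square_integrable:
  fixes f g :: "'a \<Rightarrow> real"
  assumes "f \<in> borel_measurable M" "g \<in> borel_measurable M"
    and "integrable M (\<lambda>x. (f x)\<^sup>2)" "integrable M (\<lambda>x. (g x)\<^sup>2)"
  shows "integrable M (\<lambda>x. f x * g x)"
proof (rule Bochner_Integration.integrable_bound[where f = "\<lambda>x. (f x)\<^sup>2 + (g x)\<^sup>2"])
  show "integrable M (\<lambda>x. (f x)\<^sup>2 + (g x)\<^sup>2)"
    using assms by simp
  show "(\<lambda>x. f x * g x) \<in> borel_measurable M"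
    using assms by simp
  show "AE x in M. norm (f x * g x) \<le> norm ((f x)\<^sup>2 + (g x)\<^sup>2)"
  proof (rule AE_I2)
    fix x
    have "2 * \<bar>f x * g x\<bar> \<le> (f x)\<^sup>2 + (g x)\<^sup>2"
      using sum_squares_bound[of "\<bar>f x\<bar>" "\<bar>g x\<bar>"] by (simp add: abs_mult)
    then show "norm (f x * g x) \<le> norm ((f x)\<^sup>2 + (g x)\<^sup>2)" by simp
  qed
qed

lemma covariance_kernel_eq_integral:
  assumes "centered M X" "covariance_kernel M X R" "s \<ge> 0" "t \<ge> 0"
  shows "R s t = (\<integral>\<omega>. X s \<omega> * X t \<omega> \<partial>M)"
  using assms unfolding centered_def covariance_kernel_def cov_def by simp

lemma covariance_kernel_sym:
  assumes "centered M X" "covariance_kernel M X R" "s \<ge> 0" "t \<ge> 0"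
  shows "R s t = R t s"
  using covariance_kernel_eq_integral[OF assms(1,2)] assms(3,4) by (simp add: mult.commute)

lemma cov_increments:
  assumes cen: "centered M X" and ker: "covariance_kernel M X R"
    and nonneg: "s\<^sub>0 \<ge> 0" "s\<^sub>1 \<ge> 0" "t\<^sub>0 \<ge> 0" "t\<^sub>1 \<ge> 0"
  shows "cov M (\<lambda>\<omega>. X s\<^sub>1 \<omega> - X s\<^sub>0 \<omega>) (\<lambda>\<omega>. X t\<^sub>1 \<omega> - X t\<^sub>0 \<omega>)
           = R s\<^sub>1 t\<^sub>1 - R s\<^sub>1 t\<^sub>0 - R s\<^sub>0 t\<^sub>1 + R s\<^sub>0 t\<^sub>0"
proof -
  have moments: "integrable M (X s)" "integral\<^sup>L M (X s) = 0"
    "integrable M (\<lambda>\<omega>. X s \<omega> * X t \<omega>)" if "s \<ge> 0" "t \<ge> 0" for s t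
    using that cen ker integrable_mult_square_integrable[of "X s" M "X t"]
    unfolding centered_def covariance_kernel_def by auto
  have "cov M (\<lambda>\<omega>. X s\<^sub>1 \<omega> - X s\<^sub>0 \<omega>) (\<lambda>\<omega>. X t\<^sub>1 \<omega> - X t\<^sub>0 \<omega>)
      = (\<integral>\<omega>. X s\<^sub>1 \<omega> * X t\<^sub>1 \<omega> - X s\<^sub>1 \<omega> * X t\<^sub>0 \<omega> - X s\<^sub>0 \<omega> * X t\<^sub>1 \<omega> + X s\<^sub>0 \<omega> * X t\<^sub>0 \<omega> \<partial>M)"
    using nonneg moments unfolding cov_def by (simp add: algebra_simps)
  also have "\<dots> = R s\<^sub>1 t\<^sub>1 - R s\<^sub>1 t\<^sub>0 - R s\<^sub>0 t\<^sub>1 + R s\<^sub>0 t\<^sub>0"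
    using nonneg moments covariance_kernel_eq_integral[OF cen ker] by simp
  finally show ?thesis .
qed

lemma gam_eq_kernel_second_difference:
  assumes "centered M X" "covariance_kernel M X R" "\<alpha> \<ge> 0"
  shows "gam M X \<alpha> a b = R (\<alpha> ^ (a + 1)) (\<alpha> ^ (b + 1)) - R (\<alpha> ^ (a + 1)) (\<alpha> ^ b)
                          - R (\<alpha> ^ a) (\<alpha> ^ (b + 1)) + R (\<alpha> ^ a) (\<alpha> ^ b)"
  unfolding gam_def using assms by (simp add: cov_increments)

lemma self_similar_kernel_eq_hfun:
  fixes R :: "real \<Rightarrow> real \<Rightarrow> real"
  assumes scale: "\<And>c s t. c > 0 \<Longrightarrow> s > 0 \<Longrightarrow> t > 0 \<Longrightarrow> R (c * s) (c * t) = c powr (2 * \<rho>) * R s t"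
    and "s > 0" "x > 0"
  shows "R s (s * x) = s powr (2 * \<rho>) * x powr \<rho> * hfun \<rho> R x"
proof -
  have "R s (s * x) = s powr (2 * \<rho>) * R 1 x"
    using scale[of s 1 x] assms(2,3) by simp
  moreover have "x powr \<rho> * hfun \<rho> R x = R 1 x"
    using \<open>x > 0\<close> by (simp add: hfun_def powr_minus field_simps)
  ultimately show ?thesis by simp
qed

lemma power_powr_swap:
  fixes \<alpha> :: real
  assumes "\<alpha> > 0"
  shows "(\<alpha> ^ n) powr \<rho> = (\<alpha> powr \<rho>) ^ n"
  using assms by (simp add: powr_power powr_powr mult_ac flip: powr_realpow)

lemma self_similar_kernel_grid:
  fixes R :: "real \<Rightarrow> real \<Rightarrow> real"
  assumes scale: "\<And>c s t. c > 0 \<Longrightarrow> s > 0 \<Longrightarrow> t > 0 \<Longrightarrow> R (c * s) (c * t) = c powr (2 * \<rho>) * R s t"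
    and "\<alpha> > 0"
  shows "R (\<alpha> ^ a) (\<alpha> ^ (a + d)) = (\<alpha> powr \<rho>) ^ (2 * a + d) * hfun \<rho> R (\<alpha> ^ d)"
proof -
  have "(\<alpha> ^ a) powr (2 * \<rho>) = (\<alpha> powr \<rho>) ^ (2 * a)"
    using \<open>\<alpha> > 0\<close> by (simp add: powr_power powr_powr power_mult mult_ac flip: powr_realpow)
  then show ?thesis
    using self_similar_kernel_eq_hfun[where R = R and \<rho> = \<rho>, OF scale, of "\<alpha> ^ a" "\<alpha> ^ d"] \<open>\<alpha> > 0\<close>
    by (simp add: power_powr_swap power_add)
qed

lemma self_similar_kernel_second_difference_grid:
  fixes R :: "real \<Rightarrow> real \<Rightarrow> real"
  assumes scale: "\<And>c s t. c > 0 \<Longrightarrow> s > 0 \<Longrightarrow> t > 0 \<Longrightarrow> R (c * s) (c * t) = c powr (2 * \<rho>) * R s t"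
    and sym: "\<And>s t. s > 0 \<Longrightarrow> t > 0 \<Longrightarrow> R s t = R t s"
    and "\<alpha> > 0"
  shows "R (\<alpha> ^ (a + 1)) (\<alpha> ^ (b + 1)) - R (\<alpha> ^ (a + 1)) (\<alpha> ^ b)
           - R (\<alpha> ^ a) (\<alpha> ^ (b + 1)) + R (\<alpha> ^ a) (\<alpha> ^ b)
         = (\<alpha> powr \<rho>) ^ (a + 1) * (\<alpha> powr \<rho>) ^ (b + 1) * Lfun \<rho> R \<alpha> (nat \<bar>int a - int b\<bar>)"
proof -
  define p where "p = \<alpha> powr \<rho>"
  have "p > 0" unfolding p_def using \<open>\<alpha> > 0\<close> by simp
  have inverse_powers: "\<alpha> powr (- \<rho>) = 1 / p" "\<alpha> powr (- 2 * \<rho>) = 1 / p ^ 2"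
    unfolding p_def using \<open>\<alpha> > 0\<close> by (simp_all add: powr_minus_divide power_powr_swap flip: powr_powr)
  note grid = self_similar_kernel_grid[where R = R and \<rho> = \<rho>, OF scale \<open>\<alpha> > 0\<close>, folded p_def]
  have ordered: "R (\<alpha> ^ (a + 1)) (\<alpha> ^ (a + d + 1)) - R (\<alpha> ^ (a + 1)) (\<alpha> ^ (a + d))
      - R (\<alpha> ^ a) (\<alpha> ^ (a + d + 1)) + R (\<alpha> ^ a) (\<alpha> ^ (a + d))
      = p ^ (a + 1) * p ^ (a + d + 1) * Lfun \<rho> R \<alpha> d" for a d
  proof (cases d)
    case 0
    have "R (\<alpha> ^ (a + 1)) (\<alpha> ^ a) = R (\<alpha> ^ a) (\<alpha> ^ (a + 1))"
      using sym \<open>\<alpha> > 0\<close> by simp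
    then show ?thesis
      unfolding Lfun_def inverse_powers
      using grid[of "a + 1" 0] grid[of a 1] grid[of a 0] \<open>p > 0\<close> 0
      by (simp add: power_add power_mult power2_eq_square field_simps)
  next
    case (Suc e)
    then show ?thesis
      unfolding Lfun_def inverse_powers
      using grid[of "a + 1" d] grid[of "a + 1" e] grid[of a "d + 1"] grid[of a d] \<open>p > 0\<close>
      by (simp add: power_add power_mult power2_eq_square field_simps)
  qed
  show ?thesis
  proof (cases "a \<le> b")
    case True
    then obtain d where "b = a + d" using le_Suc_ex by blast
    then show ?thesis using ordered[of a d] by (simp add: p_def ac_simps)
  next
    case False
    then obtain d where "a = b + d" using le_Suc_ex[of b a] by auto
    then show ?thesis
      using ordered[of b d] sym \<open>\<alpha> > 0\<close> by (simp add: p_def ac_simps)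
  qed
qed

lemma correlation_of_product_form:
  fixes g :: "nat \<Rightarrow> nat \<Rightarrow> real"
  assumes product: "\<And>a b. g a b = c a * c b * L (nat \<bar>int a - int b\<bar>)"
    and pos: "\<And>a. c a > 0"
    and "g k k > 0" "g l l > 0"
  shows "g k l / (sqrt (g k k) * sqrt (g l l)) = L (nat \<bar>int k - int l\<bar>) / L 0"
proof -
  have diag: "g a a = (c a)\<^sup>2 * L 0" for a
    using product[of a a] by (simp add: power2_eq_square)
  then have "L 0 > 0"
    using \<open>g k k > 0\<close> pos[of k] by (simp add: zero_less_mult_iff)
  then have "sqrt (g k k) * sqrt (g l l) = c k * c l * L 0"
    using pos[of k] pos[of l] by (simp add: diag real_sqrt_mult less_imp_le)
  then show ?thesis
    using product[of k l] pos[of k] pos[of l] by simp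
qed

theorem lemma4p5:
  fixes M :: "'a measure" and X :: "real \<Rightarrow> 'a \<Rightarrow> real"
    and R :: "real \<Rightarrow> real \<Rightarrow> real" and \<rho> \<alpha> :: real and k l :: nat
  assumes "gaussian_process M X"
    and "centered M X"
    and "continuous_paths M X"
    and "covariance_kernel M X R"
    and "\<rho> > 0"
    and "\<And>c s t. c > 0 \<Longrightarrow> s > 0 \<Longrightarrow> t > 0 \<Longrightarrow> R (c * s) (c * t) = c powr (2 * \<rho>) * R s t"
    and "\<alpha> > 1"
    and "gam M X \<alpha> k k > 0" and "gam M X \<alpha> l l > 0"
  shows "gam M X \<alpha> k l / (sqrt (gam M X \<alpha> k k) * sqrt (gam M X \<alpha> l l))
           = Lfun \<rho> R \<alpha> (nat \<bar>int k - int l\<bar>) / Lfun \<rho> R \<alpha> 0"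
proof (rule correlation_of_product_form)
  have "R s t = R t s" if "s > 0" "t > 0" for s t
    using covariance_kernel_sym[OF assms(2,4)] that by simp
  then show "gam M X \<alpha> a b = (\<alpha> powr \<rho>) ^ (a + 1) * (\<alpha> powr \<rho>) ^ (b + 1)
                              * Lfun \<rho> R \<alpha> (nat \<bar>int a - int b\<bar>)" for a b
    using gam_eq_kernel_second_difference[OF assms(2,4)]
      self_similar_kernel_second_difference_grid[where R = R and \<rho> = \<rho>, OF assms(6)] \<open>\<alpha> > 1\<close>
    by simp
  show "(\<alpha> powr \<rho>) ^ (a + 1) > 0" for a
    using \<open>\<alpha> > 1\<close> by simp
qed (use assms(8,9) in auto)

end
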